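(* Let $\alpha,\beta,\gamma,\eta>0$ and $\rho\in(0,1)$ with $\gamma\geq\alpha$, and consider the system $$S'=-\beta IS+\gamma(1-S-I-R)+\eta R,\qquad I'=\rho\beta IS-\alpha I+\beta I(1-S-I-R),\qquad R'=\alpha I-\eta R.$$ (a) The system has a unique disease-free equilibrium (an equilibrium with $I=0$), namely $\mathcal{E}_0=(S,I,R)=(1,0,0)$, and it exists for every such choice of parameters. (b) Let $\mathcal{R}_0:=\frac{\rho\beta}{\alpha}$. Then $\mathcal{E}_0$ is locally asymptotically stable if $\mathcal{R}_0<1$ and unstable if $\mathcal{R}_0>1$.
   Context: This is the reduced form (using $W=1-S-I-R$) of a four-compartment model $S,W,I,R$ with total population normalized to $1$, in which the transmission rates from $S$ and from $W$ are taken equal to $\beta$. The state $(S,I,R)$ corresponds to nonnegative compartments with $S+I+R\le 1$. *)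

theory Defs
  imports "HOL-Analysis.Analysis"
begin

definition swir_field :: "real \<Rightarrow> real \<Rightarrow> real \<Rightarrow> real \<Rightarrow> real \<Rightarrow> real \<times> real \<times> real \<Rightarrow> real \<times> real \<times> real" where
  "swir_field \<alpha> \<beta> \<gamma> \<eta> \<rho> = (\<lambda>(S, I, R).
     (- \<beta> * I * S + \<gamma> * (1 - S - I - R) + \<eta> * R,
      \<rho> * \<beta> * I * S - \<alpha> * I + \<beta> * I * (1 - S - I - R),
      \<alpha> * I - \<eta> * R))"

definition ode_solution :: "('a::real_normed_vector \<Rightarrow> 'a) \<Rightarrow> (real \<Rightarrow> 'a) \<Rightarrow> real set \<Rightarrow> bool" where
  "ode_solution F x T \<longleftrightarrow> (\<forall>t\<in>T. (x has_vector_derivative F (x t)) (at t within T))"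

definition equilibrium :: "('a::real_normed_vector \<Rightarrow> 'a) \<Rightarrow> 'a \<Rightarrow> bool" where
  "equilibrium F p \<longleftrightarrow> F p = 0"

definition lyapunov_stable :: "('a::real_normed_vector \<Rightarrow> 'a) \<Rightarrow> 'a \<Rightarrow> bool" where
  "lyapunov_stable F p \<longleftrightarrow>
     (\<forall>\<epsilon>>0. \<exists>\<delta>>0. \<forall>x b. ode_solution F x {0..b} \<and> dist (x 0) p < \<delta>
        \<longrightarrow> (\<forall>t\<in>{0..b}. dist (x t) p < \<epsilon>))"

definition locally_asymptotically_stable :: "('a::real_normed_vector \<Rightarrow> 'a) \<Rightarrow> 'a \<Rightarrow> bool" where
  "locally_asymptotically_stable F p \<longleftrightarrow> equilibrium F p \<and> lyapunov_stable F p \<and>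
     (\<exists>\<delta>>0. \<forall>x. ode_solution F x {0..} \<and> dist (x 0) p < \<delta> \<longrightarrow> (x \<longlongrightarrow> p) at_top)"

definition unstable_equilibrium :: "('a::real_normed_vector \<Rightarrow> 'a) \<Rightarrow> 'a \<Rightarrow> bool" where
  "unstable_equilibrium F p \<longleftrightarrow> equilibrium F p \<and> \<not> lyapunov_stable F p"

end

theory Submission
  imports Defs "HOL-Real_Asymp.Real_Asymp"
begin

text \<open>At \<open>E\<^sub>0 = (1, 0, 0)\<close> the linearisation is triangular: \<open>I' \<approx> (\<rho> \<beta> - \<alpha>) I\<close> does not
  involve \<open>S\<close> or \<open>R\<close>, so its eigenvalues are \<open>-\<gamma>\<close>, \<open>-\<eta>\<close> and \<open>\<rho> \<beta> - \<alpha> = \<alpha> (R\<^sub>0 - 1)\<close>.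
  If \<open>R\<^sub>0 < 1\<close>, a weighted quadratic form \<open>(S - 1)\<^sup>2 + A R\<^sup>2 + B I\<^sup>2\<close>, with \<open>A\<close> and \<open>B\<close> large
  enough to absorb the off-diagonal terms, decays exponentially along solutions near \<open>E\<^sub>0\<close>.
  If \<open>R\<^sub>0 > 1\<close>, then \<open>I'/I \<ge> (\<rho> \<beta> - \<alpha>) / 2\<close> on a small ball around \<open>E\<^sub>0\<close>, so every solution
  starting at \<open>(1, I\<^sub>0, 0)\<close> with \<open>I\<^sub>0 > 0\<close> leaves the ball; such solutions exist because the field,
  composed with the nearest-point retraction onto the ball, is globally Lipschitz.\<close>

section \<open>Existence of solutions for globally Lipschitz fields\<close>

lemma has_integral_exp_linear:
  fixes K u :: real
  assumes "K \<noteq> 0" "0 \<le> u"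
  shows "((\<lambda>s. exp (K * s)) has_integral (exp (K * u) - 1) / K) {0..u}"
proof -
  have "((\<lambda>s. exp (K * s)) has_integral exp (K * u) / K - exp (K * 0) / K) {0..u}"
  proof (rule fundamental_theorem_of_calculus)
    fix s assume "s \<in> {0..u}"
    have "((\<lambda>s. exp (K * s) / K) has_real_derivative exp (K * s)) (at s within {0..u})"
      using assms by (auto intro!: derivative_eq_intros)
    then show "((\<lambda>s. exp (K * s) / K) has_vector_derivative exp (K * s)) (at s within {0..u})"
      by (simp add: has_real_derivative_iff_has_vector_derivative)
  qed (use assms in auto)
  then show ?thesis by (simp add: diff_divide_distrib)
qed

lemma ode_solution_if_integral_equation:
  fixes G :: "'a::banach \<Rightarrow> 'a"
  assumes "continuous_on {0..T} (\<lambda>s. G (y s))"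
    and "\<And>t. t \<in> {0..T} \<Longrightarrow> y t = y0 + integral {0..t} (\<lambda>s. G (y s))"
  shows "ode_solution G y {0..T}"
  unfolding ode_solution_def
proof
  fix t assume t: "t \<in> {0..T}"
  have "((\<lambda>u. y0 + integral {0..u} (\<lambda>s. G (y s))) has_vector_derivative G (y t)) (at t within {0..T})"
    using integral_has_vector_derivative[OF assms(1) t] by (auto intro!: derivative_eq_intros)
  from has_vector_derivative_transform[OF t assms(2) this]
  show "(y has_vector_derivative G (y t)) (at t within {0..T})" by simp
qed

text \<open>One Picard step for \<open>y t = exp (K * t) *\<^sub>R w t\<close>, written in the rescaled unknown \<open>w\<close> and
  frozen outside \<open>[0, T]\<close>. The sup-norm of \<open>w\<close> is Bielecki's weighted norm of \<open>y\<close>, in which the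
  step contracts with ratio \<open>L / K\<close>.\<close>
definition bielecki_picard :: "real \<Rightarrow> real \<Rightarrow> ('a::banach \<Rightarrow> 'a) \<Rightarrow> 'a \<Rightarrow> (real \<Rightarrow>\<^sub>C 'a) \<Rightarrow> real \<Rightarrow> 'a"
  where "bielecki_picard K T G y0 w t =
    (let u = max 0 (min T t) in exp (- K * u) *\<^sub>R (y0 + integral {0..u} (\<lambda>s. G (exp (K * s) *\<^sub>R w s))))"

lemma bielecki_picard_bcontfun:
  assumes "continuous_on UNIV G" "0 \<le> T"
  shows "bielecki_picard K T G y0 w \<in> bcontfun"
proof -
  define g where "g u = exp (- K * u) *\<^sub>R (y0 + integral {0..u} (\<lambda>s. G (exp (K * s) *\<^sub>R w s)))" for u
  define clamp where "clamp t = max 0 (min T t)" for t :: real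
  have eq: "bielecki_picard K T G y0 w = g \<circ> clamp"
    by (simp add: fun_eq_iff bielecki_picard_def g_def clamp_def Let_def)
  have g: "continuous_on {0..T} g"
    unfolding g_def
    by (intro continuous_intros indefinite_integral_continuous_1 integrable_continuous_real
        continuous_on_compose2[OF assms(1)]) auto
  have clamp: "continuous_on UNIV clamp" "range clamp \<subseteq> {0..T}"
    using assms(2) by (auto simp: clamp_def intro!: continuous_intros)
  have "continuous_on UNIV (g \<circ> clamp)"
    using continuous_on_compose[OF clamp(1) continuous_on_subset[OF g clamp(2)]] .
  moreover have "bounded (range (g \<circ> clamp))"
    using clamp(2) by (intro bounded_subset[OF compact_imp_bounded[OF compact_continuous_image[OF g]]])
      (auto simp: image_comp[symmetric] image_mono)
  ultimately show ?thesis by (simp add: bcontfun_def eq)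
qed

lemma bielecki_picard_dist_le:
  assumes lip: "L-lipschitz_on UNIV G" and "0 < K"
  shows "dist (bielecki_picard K T G y0 w t) (bielecki_picard K T G y0 v t) \<le> L / K * dist w v"
proof -
  define u where "u = max 0 (min T t)"
  define h where "h w = (\<lambda>s. G (exp (K * s) *\<^sub>R apply_bcontfun w s))" for w
  have "0 \<le> u" by (simp add: u_def)
  have L: "0 \<le> L" using lipschitz_on_nonneg[OF lip] .
  have int: "h w integrable_on {0..u}" for w
    unfolding h_def
    by (intro integrable_continuous_real continuous_on_compose2[OF lipschitz_on_continuous_on[OF lip]]
        continuous_intros) auto
  have pointwise: "norm (h w s - h v s) \<le> L * dist w v * exp (K * s)" for s
  proof -
    have "norm (h w s - h v s) \<le> L * norm (exp (K * s) *\<^sub>R (apply_bcontfun w s - apply_bcontfun v s))"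
      using lipschitz_onD[OF lip UNIV_I UNIV_I] by (simp add: h_def dist_norm scaleR_diff_right)
    also have "\<dots> = L * (exp (K * s) * dist (apply_bcontfun w s) (apply_bcontfun v s))"
      by (simp add: dist_norm)
    also have "\<dots> \<le> L * (exp (K * s) * dist w v)"
      using L by (intro mult_left_mono dist_bounded) auto
    finally show ?thesis by (simp add: algebra_simps)
  qed
  have exp_int: "((\<lambda>s. L * dist w v * exp (K * s)) has_integral L * dist w v * ((exp (K * u) - 1) / K)) {0..u}"
    using \<open>0 < K\<close> \<open>0 \<le> u\<close> by (intro has_integral_mult_right has_integral_exp_linear) auto
  have "dist (bielecki_picard K T G y0 w t) (bielecki_picard K T G y0 v t)
      = exp (- K * u) * norm (integral {0..u} (h w) - integral {0..u} (h v))"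
    by (simp add: bielecki_picard_def Let_def u_def[symmetric] h_def dist_norm flip: scaleR_diff_right)
  also have "\<dots> = exp (- K * u) * norm (integral {0..u} (\<lambda>s. h w s - h v s))"
    using int by (simp add: integral_diff)
  also have "\<dots> \<le> exp (- K * u) * integral {0..u} (\<lambda>s. L * dist w v * exp (K * s))"
    using int pointwise exp_int by (intro mult_left_mono integral_norm_bound_integral integrable_diff) auto
  also have "\<dots> = L * dist w v * (1 - exp (- K * u)) / K"
    using integral_unique[OF exp_int] by (simp add: field_simps exp_minus)
  also have "\<dots> \<le> L / K * dist w v"
    using L \<open>0 < K\<close> by (simp add: divide_right_mono mult_left_le)
  finally show ?thesis .
qed

lemma lipschitz_ode_solution_exists:
  fixes G :: "'a::banach \<Rightarrow> 'a"
  assumes lip: "L-lipschitz_on UNIV G" and "0 \<le> T"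
  obtains y where "y 0 = y0" "ode_solution G y {0..T}"
proof -
  define K where "K = 2 * L + 1"
  have "0 \<le> L" using lipschitz_on_nonneg[OF lip] .
  then have "0 < K" "L / K \<le> 1 / 2" by (auto simp: K_def field_simps)
  have cont: "continuous_on UNIV G" using lipschitz_on_continuous_on[OF lip] .
  define P where "P w = Bcontfun (bielecki_picard K T G y0 w)" for w
  have P: "apply_bcontfun (P w) = bielecki_picard K T G y0 w" for w
    unfolding P_def using bielecki_picard_bcontfun[OF cont \<open>0 \<le> T\<close>] by (simp add: Bcontfun_inverse)
  have "dist (P w) (P v) \<le> 1 / 2 * dist w v" for w v
  proof (rule dist_bound)
    fix t
    have "dist (apply_bcontfun (P w) t) (apply_bcontfun (P v) t) \<le> L / K * dist w v"
      unfolding P using bielecki_picard_dist_le[OF lip \<open>0 < K\<close>] .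
    also have "\<dots> \<le> 1 / 2 * dist w v"
      using \<open>L / K \<le> 1 / 2\<close> by (intro mult_right_mono) auto
    finally show "dist (apply_bcontfun (P w) t) (apply_bcontfun (P v) t) \<le> 1 / 2 * dist w v" .
  qed
  then obtain w where "P w = w"
    using banach_fix_type[of "1 / 2" P] by auto
  define y where "y t = exp (K * t) *\<^sub>R apply_bcontfun w t" for t
  have y: "y t = y0 + integral {0..t} (\<lambda>s. G (y s))" if "t \<in> {0..T}" for t
  proof -
    have "apply_bcontfun w t = bielecki_picard K T G y0 w t"
      using P[of w] \<open>P w = w\<close> by simp
    also have "\<dots> = exp (- K * t) *\<^sub>R (y0 + integral {0..t} (\<lambda>s. G (y s)))"
      using that by (simp add: bielecki_picard_def y_def)
    finally show ?thesis
      by (simp add: y_def exp_minus field_simps)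
  qed
  show thesis
  proof
    show "y 0 = y0" using y[of 0] \<open>0 \<le> T\<close> by simp
    show "ode_solution G y {0..T}"
      using y unfolding y_def
      by (intro ode_solution_if_integral_equation continuous_on_compose2[OF cont] continuous_intros) auto
  qed
qed

section \<open>Monotonicity and first hitting times\<close>

lemma DERIV_within_nonpos_imp_decreasing:
  fixes \<phi> \<phi>' :: "real \<Rightarrow> real"
  assumes deriv: "\<And>t. t \<in> {a..b} \<Longrightarrow> (\<phi> has_real_derivative \<phi>' t) (at t within {a..b})"
    and nonpos: "\<And>t. t \<in> {s<..<u} \<Longrightarrow> \<phi>' t \<le> 0"
    and "a \<le> s" "s \<le> u" "u \<le> b"
  shows "\<phi> u \<le> \<phi> s"
proof (rule DERIV_nonpos_imp_decreasing_open[OF \<open>s \<le> u\<close>])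
  have "continuous_on {a..b} \<phi>" using DERIV_continuous_on[OF deriv] by simp
  then show "continuous_on {s..u} \<phi>"
    by (rule continuous_on_subset) (use \<open>a \<le> s\<close> \<open>u \<le> b\<close> in auto)
next
  fix t assume "s < t" "t < u"
  then have "(\<phi> has_real_derivative \<phi>' t) (at t)"
    using deriv[of t] \<open>a \<le> s\<close> \<open>u \<le> b\<close> by (simp add: at_within_Icc_at)
  then show "\<exists>y. (\<phi> has_real_derivative y) (at t) \<and> y \<le> 0"
    using nonpos \<open>s < t\<close> \<open>t < u\<close> by auto
qed

lemma first_hitting_time:
  fixes f :: "real \<Rightarrow> real"
  assumes cont: "continuous_on {a..b} f" and "f a < c" and t: "t \<in> {a..b}" "c \<le> f t"
  obtains t1 where "a < t1" "t1 \<le> t" "f t1 = c" "\<And>s. a \<le> s \<Longrightarrow> s < t1 \<Longrightarrow> f s < c"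
proof -
  define C where "C = {a..t} \<inter> f -` {c..}"
  have "closed C"
    unfolding C_def using cont t(1)
    by (intro continuous_closed_preimage) (auto intro: continuous_on_subset)
  moreover have "t \<in> C" using t by (simp add: C_def)
  moreover have "bdd_below C" by (auto simp: C_def bdd_below_def)
  ultimately have "Inf C \<in> C" using closed_contains_Inf by blast
  then have "a \<le> Inf C" "Inf C \<le> t" "c \<le> f (Inf C)" by (auto simp: C_def)
  have below: "f s < c" if "a \<le> s" "s < Inf C" for s
  proof (rule ccontr)
    assume "\<not> f s < c"
    then have "s \<in> C" using that \<open>Inf C \<le> t\<close> by (auto simp: C_def)
    then show False using cInf_lower[OF _ \<open>bdd_below C\<close>] that(2) by fastforce
  qed
  have "continuous_on {a..Inf C} f"
    using cont by (rule continuous_on_subset) (use \<open>Inf C \<le> t\<close> t(1) in auto)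
  then obtain s where s: "a \<le> s" "s \<le> Inf C" "f s = c"
    using IVT'[of f a c "Inf C"] \<open>f a < c\<close> \<open>c \<le> f (Inf C)\<close> \<open>a \<le> Inf C\<close> by auto
  have "s = Inf C"
    using below[of s] s by (cases "s < Inf C") auto
  show thesis
  proof (rule that)
    show "a < Inf C"
      using \<open>a \<le> Inf C\<close> \<open>f a < c\<close> \<open>c \<le> f (Inf C)\<close> by (cases "a = Inf C") auto
    show "f (Inf C) = c" using s \<open>s = Inf C\<close> by simp
  qed (use \<open>Inf C \<le> t\<close> below in auto)
qed

lemma DERIV_nonpos_below_imp_stays_below:
  fixes \<phi> \<phi>' :: "real \<Rightarrow> real"
  assumes deriv: "\<And>t. t \<in> {a..b} \<Longrightarrow> (\<phi> has_real_derivative \<phi>' t) (at t within {a..b})"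
    and nonpos: "\<And>t. t \<in> {a..b} \<Longrightarrow> \<phi> t < c \<Longrightarrow> \<phi>' t \<le> 0"
    and "\<phi> a < c" "t \<in> {a..b}"
  shows "\<phi> t < c"
proof (rule ccontr)
  assume "\<not> \<phi> t < c"
  then have "c \<le> \<phi> t" by simp
  moreover have "continuous_on {a..b} \<phi>" using DERIV_continuous_on[OF deriv] by simp
  ultimately obtain t1 where t1: "a < t1" "t1 \<le> t" "\<phi> t1 = c" "\<And>s. a \<le> s \<Longrightarrow> s < t1 \<Longrightarrow> \<phi> s < c"
    using first_hitting_time \<open>\<phi> a < c\<close> \<open>t \<in> {a..b}\<close> by metis
  have "\<phi> t1 \<le> \<phi> a"
  proof (rule DERIV_within_nonpos_imp_decreasing[OF deriv])
    fix s assume "s \<in> {a<..<t1}"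
    then show "\<phi>' s \<le> 0" using nonpos t1(2,4) \<open>t \<in> {a..b}\<close> by simp
  qed (use t1 \<open>t \<in> {a..b}\<close> in auto)
  then show False using t1 \<open>\<phi> a < c\<close> by simp
qed

lemma exponential_growth_if_DERIV_ge:
  fixes I g :: "real \<Rightarrow> real"
  assumes deriv: "\<And>s. s \<in> {0..b} \<Longrightarrow> (I has_real_derivative I s * g s) (at s within {0..b})"
    and g: "\<And>s. s \<in> {0..b} \<Longrightarrow> k \<le> g s" and "0 \<le> k" "0 < I 0" "t \<in> {0..b}"
  shows "I 0 * exp (k * t) \<le> I t"
proof -
  have pos: "0 < I s" if "s \<in> {0..b}" for s
  proof -
    have "- I s < 0"
    proof (rule DERIV_nonpos_below_imp_stays_below[where \<phi> = "\<lambda>s. - I s" and \<phi>' = "\<lambda>s. - (I s * g s)"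
          and a = 0 and b = b])
      fix s assume "s \<in> {0..b}" "- I s < 0"
      then show "- (I s * g s) \<le> 0"
        using g[of s] \<open>0 \<le> k\<close> by simp
    next
      fix s assume "s \<in> {0..b}"
      then show "((\<lambda>s. - I s) has_real_derivative - (I s * g s)) (at s within {0..b})"
        by (intro DERIV_minus deriv)
    qed (use that \<open>0 < I 0\<close> in auto)
    then show ?thesis by simp
  qed
  have "- I t * exp (- k * t) \<le> - I 0 * exp (- k * 0)"
  proof (rule DERIV_within_nonpos_imp_decreasing[where \<phi> = "\<lambda>s. - I s * exp (- k * s)"
        and \<phi>' = "\<lambda>s. - I s * exp (- k * s) * (g s - k)" and a = 0 and b = b])
    fix s assume "s \<in> {0..b}"
    then show "((\<lambda>s. - I s * exp (- k * s)) has_real_derivative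
        - I s * exp (- k * s) * (g s - k)) (at s within {0..b})"
      using deriv by (auto intro!: derivative_eq_intros simp: algebra_simps)
  next
    fix s assume "s \<in> {0<..<t}"
    then have "s \<in> {0..b}" using \<open>t \<in> {0..b}\<close> by simp
    then have "0 \<le> I s * exp (- k * s) * (g s - k)"
      using pos g by (intro mult_nonneg_nonneg) (auto intro: less_imp_le)
    then show "- I s * exp (- k * s) * (g s - k) \<le> 0" by simp
  qed (use \<open>t \<in> {0..b}\<close> in auto)
  then have "I 0 * exp (k * t) \<le> I t * exp (- k * t) * exp (k * t)"
    by (intro mult_right_mono) auto
  also have "\<dots> = I t"
    by (simp add: mult.assoc flip: exp_add)
  finally show ?thesis .
qed

section \<open>Lyapunov functions and escape from a ball\<close>

lemma ode_solution_subset: "ode_solution F x T \<Longrightarrow> S \<subseteq> T \<Longrightarrow> ode_solution F x S"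
  unfolding ode_solution_def by (meson has_vector_derivative_within_subset subsetD)

lemma ode_solution_continuous_on: "ode_solution F x T \<Longrightarrow> continuous_on T x"
  unfolding ode_solution_def continuous_on_eq_continuous_within
  by (blast intro: has_vector_derivative_continuous)

lemma ode_solution_derivative_compose:
  assumes "ode_solution F x {a..b}" "\<And>y. (V has_derivative V' y) (at y)" "t \<in> {a..b}"
  shows "((\<lambda>t. V (x t)) has_real_derivative V' (x t) (F (x t))) (at t within {a..b})"
proof -
  have "(x has_vector_derivative F (x t)) (at t within {a..b})"
    using assms(1,3) by (simp add: ode_solution_def)
  from vector_derivative_diff_chain_within[OF this has_derivative_at_withinI[OF assms(2)]]
  show ?thesis by (simp add: has_real_derivative_iff_has_vector_derivative o_def)
qed

locale exponential_lyapunov =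
  fixes F :: "'a::real_normed_vector \<Rightarrow> 'a" and p :: 'a
    and V :: "'a \<Rightarrow> real" and V' :: "'a \<Rightarrow> 'a \<Rightarrow> real" and M r c :: real
  assumes F_zero: "F p = 0"
    and V_deriv: "\<And>y. (V has_derivative V' y) (at y)"
    and lower: "\<And>y. (dist y p)\<^sup>2 \<le> V y" and upper: "\<And>y. V y \<le> M * (dist y p)\<^sup>2"
    and decay: "\<And>y. V y < r \<Longrightarrow> V' y (F y) \<le> - c * V y"
    and c_pos: "0 < c" and r_pos: "0 < r"
begin

lemma V_nonneg: "0 \<le> V y"
  using lower[of y] by (meson order_trans zero_le_power2)

lemma V_less_if_dist_less:
  assumes "dist y p < sqrt (m / max 1 M)" "0 < m"
  shows "V y < m"
proof -
  have "(dist y p)\<^sup>2 < (sqrt (m / max 1 M))\<^sup>2"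
    using assms by (intro power_strict_mono) auto
  then have "max 1 M * (dist y p)\<^sup>2 < m"
    using \<open>0 < m\<close> by (simp add: field_simps)
  moreover have "M * (dist y p)\<^sup>2 \<le> max 1 M * (dist y p)\<^sup>2" by (simp add: mult_right_mono)
  ultimately show ?thesis using upper[of y] by linarith
qed

lemma exponential_decay:
  assumes sol: "ode_solution F x {0..b}" and "V (x 0) < r" "t \<in> {0..b}"
  shows "V (x t) \<le> V (x 0) * exp (- c * t)"
proof -
  define v where "v s = V' (x s) (F (x s))" for s
  have deriv: "((\<lambda>s. V (x s)) has_real_derivative v s) (at s within {0..b})" if "s \<in> {0..b}" for s
    unfolding v_def using sol V_deriv that by (rule ode_solution_derivative_compose)
  have inside: "V (x s) < r" if "s \<in> {0..b}" for s
  proof (rule DERIV_nonpos_below_imp_stays_below[where \<phi> = "\<lambda>s. V (x s)" and \<phi>' = v and a = 0 and b = b])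
    fix s assume "s \<in> {0..b}" "V (x s) < r"
    then show "v s \<le> 0"
      unfolding v_def using decay[of "x s"] mult_nonneg_nonneg[OF less_imp_le[OF c_pos] V_nonneg[of "x s"]] by linarith
  qed (use deriv \<open>V (x 0) < r\<close> that in auto)
  have "exp (c * t) * V (x t) \<le> exp (c * 0) * V (x 0)"
  proof (rule DERIV_within_nonpos_imp_decreasing[where \<phi> = "\<lambda>s. exp (c * s) * V (x s)"
        and \<phi>' = "\<lambda>s. exp (c * s) * (c * V (x s) + v s)" and a = 0 and b = b])
    fix s assume "s \<in> {0..b}"
    then show "((\<lambda>s. exp (c * s) * V (x s)) has_real_derivative
        exp (c * s) * (c * V (x s) + v s)) (at s within {0..b})"
      using deriv by (auto intro!: derivative_eq_intros simp: algebra_simps)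
  next
    fix s assume "s \<in> {0<..<t}"
    then have "s \<in> {0..b}" using \<open>t \<in> {0..b}\<close> by simp
    from decay[OF inside[OF this]] have "c * V (x s) + v s \<le> 0"
      by (simp add: v_def)
    then show "exp (c * s) * (c * V (x s) + v s) \<le> 0"
      by (simp add: mult_nonneg_nonpos)
  qed (use \<open>t \<in> {0..b}\<close> in auto)
  then show ?thesis by (simp add: exp_minus field_simps)
qed

lemma dist_solution_le:
  assumes "ode_solution F x {0..b}" "V (x 0) < r" "t \<in> {0..b}"
  shows "dist (x t) p \<le> sqrt (V (x 0) * exp (- c * t))"
  using exponential_decay[OF assms] lower[of "x t"] by (simp add: real_le_rsqrt)

lemma stable: "lyapunov_stable F p"
  unfolding lyapunov_stable_def
proof (intro allI impI)
  fix \<epsilon> :: real assume "0 < \<epsilon>"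
  define m where "m = min r (\<epsilon>\<^sup>2)"
  have "0 < m" using r_pos \<open>0 < \<epsilon>\<close> by (simp add: m_def)
  show "\<exists>\<delta>>0. \<forall>x b. ode_solution F x {0..b} \<and> dist (x 0) p < \<delta> \<longrightarrow> (\<forall>t\<in>{0..b}. dist (x t) p < \<epsilon>)"
  proof (intro exI conjI allI impI ballI)
    show "0 < sqrt (m / max 1 M)" using \<open>0 < m\<close> by simp
    fix x b t assume "ode_solution F x {0..b} \<and> dist (x 0) p < sqrt (m / max 1 M)" "t \<in> {0..b}"
    moreover from this have "V (x 0) < m" using V_less_if_dist_less \<open>0 < m\<close> by blast
    ultimately have "dist (x t) p \<le> sqrt (V (x 0) * exp (- c * t))"
      by (intro dist_solution_le) (auto simp: m_def)
    also have "\<dots> \<le> sqrt (V (x 0))"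
      using V_nonneg[of "x 0"] c_pos \<open>t \<in> {0..b}\<close> by (simp add: mult_left_le)
    also have "\<dots> < sqrt (\<epsilon>\<^sup>2)"
      using \<open>V (x 0) < m\<close> by (intro real_sqrt_less_mono) (simp add: m_def)
    also have "\<dots> = \<epsilon>"
      using \<open>0 < \<epsilon>\<close> by simp
    finally show "dist (x t) p < \<epsilon>" .
  qed
qed

lemma attractive: "\<exists>\<delta>>0. \<forall>x. ode_solution F x {0..} \<and> dist (x 0) p < \<delta> \<longrightarrow> (x \<longlongrightarrow> p) at_top"
proof (intro exI conjI allI impI)
  show "0 < sqrt (r / max 1 M)" using r_pos by simp
  fix x assume x: "ode_solution F x {0..} \<and> dist (x 0) p < sqrt (r / max 1 M)"
  then have "V (x 0) < r" using V_less_if_dist_less r_pos by blast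
  have "dist (x t) p \<le> sqrt (V (x 0) * exp (- c * t))" if "0 \<le> t" for t
    using dist_solution_le[of x t t] x ode_solution_subset[of F x "{0..}" "{0..t}"] that \<open>V (x 0) < r\<close>
    by auto
  then have ev: "\<forall>\<^sub>F t in at_top. dist (x t) p \<le> sqrt (V (x 0) * exp (- c * t))"
    unfolding eventually_at_top_linorder by blast
  have "((\<lambda>t. exp (- c * t)) \<longlongrightarrow> 0) at_top"
    using c_pos by real_asymp
  then have lim: "((\<lambda>t. sqrt (V (x 0) * exp (- c * t))) \<longlongrightarrow> 0) at_top"
    using tendsto_real_sqrt[OF tendsto_mult_left[of _ 0 _ "V (x 0)"]] by simp
  have "((\<lambda>t. dist (x t) p) \<longlongrightarrow> 0) at_top"
    by (rule tendsto_sandwich[OF _ ev tendsto_const lim]) simp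
  then show "(x \<longlongrightarrow> p) at_top" by (rule tendsto_dist_iff[THEN iffD2])
qed

theorem asymptotically_stable: "locally_asymptotically_stable F p"
  using F_zero stable attractive unfolding locally_asymptotically_stable_def equilibrium_def by blast

end

definition lipschitzian_on :: "'a::metric_space set \<Rightarrow> ('a \<Rightarrow> 'b::metric_space) \<Rightarrow> bool"
  where "lipschitzian_on X f \<longleftrightarrow> (\<exists>L. L-lipschitz_on X f)"

lemma lipschitzian_on_const: "lipschitzian_on X (\<lambda>x. c)"
  unfolding lipschitzian_on_def using lipschitz_on_constant by blast

lemma lipschitzian_on_bounded_linear: "bounded_linear f \<Longrightarrow> lipschitzian_on X f"
  unfolding lipschitzian_on_def by (metis bounded_linear.lipschitz_boundE)

lemma lipschitzian_on_add:
  fixes f g :: "'a::metric_space \<Rightarrow> 'b::real_normed_vector"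
  shows "lipschitzian_on X f \<Longrightarrow> lipschitzian_on X g \<Longrightarrow> lipschitzian_on X (\<lambda>x. f x + g x)"
  unfolding lipschitzian_on_def by (metis lipschitz_on_add)

lemma lipschitzian_on_diff:
  fixes f g :: "'a::metric_space \<Rightarrow> 'b::real_normed_vector"
  shows "lipschitzian_on X f \<Longrightarrow> lipschitzian_on X g \<Longrightarrow> lipschitzian_on X (\<lambda>x. f x - g x)"
  unfolding lipschitzian_on_def by (metis lipschitz_on_diff)

lemma lipschitzian_on_Pair:
  "lipschitzian_on X f \<Longrightarrow> lipschitzian_on X g \<Longrightarrow> lipschitzian_on X (\<lambda>x. (f x, g x))"
  unfolding lipschitzian_on_def by (metis lipschitz_on_Pair)

lemma bounded_image_if_lipschitz_on:
  assumes "L-lipschitz_on X f" "bounded X"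
  shows "bounded (f ` X)"
proof (cases "X = {}")
  case False
  then obtain x0 where "x0 \<in> X" by blast
  obtain r where r: "\<And>x. x \<in> X \<Longrightarrow> dist x0 x \<le> r"
    using \<open>bounded X\<close> bounded_any_center by (metis)
  have "dist (f x0) (f x) \<le> L * r" if "x \<in> X" for x
    using lipschitz_onD[OF assms(1) \<open>x0 \<in> X\<close> that] r[OF that] lipschitz_on_nonneg[OF assms(1)]
    by (meson mult_left_mono order_trans)
  then show ?thesis unfolding bounded_def by blast
qed simp

lemma lipschitzian_on_mult:
  fixes f g :: "'a::metric_space \<Rightarrow> 'b::real_normed_algebra"
  assumes "bounded X" "lipschitzian_on X f" "lipschitzian_on X g"
  shows "lipschitzian_on X (\<lambda>x. f x * g x)"
proof -
  obtain Lf Lg where Lf: "Lf-lipschitz_on X f" and Lg: "Lg-lipschitz_on X g"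
    using assms(2,3) by (auto simp: lipschitzian_on_def)
  obtain Bf Bg where Bf: "\<And>x. x \<in> X \<Longrightarrow> norm (f x) \<le> Bf" "0 < Bf"
    and Bg: "\<And>x. x \<in> X \<Longrightarrow> norm (g x) \<le> Bg" "0 < Bg"
    using bounded_image_if_lipschitz_on[OF Lf \<open>bounded X\<close>] bounded_image_if_lipschitz_on[OF Lg \<open>bounded X\<close>]
    by (auto simp: bounded_pos)
  have "(Bf * Lg + Bg * Lf)-lipschitz_on X (\<lambda>x. f x * g x)"
  proof (rule lipschitz_onI)
    fix x y assume xy: "x \<in> X" "y \<in> X"
    have "f x * g x - f y * g y = f x * (g x - g y) + (f x - f y) * g y"
      by (simp add: algebra_simps)
    then have "dist (f x * g x) (f y * g y) \<le> norm (f x) * dist (g x) (g y) + dist (f x) (f y) * norm (g y)"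
      by (metis dist_norm norm_mult_ineq norm_triangle_le add_mono)
    also have "\<dots> \<le> Bf * (Lg * dist x y) + (Lf * dist x y) * Bg"
      using xy Bf Bg lipschitz_onD[OF Lf xy] lipschitz_onD[OF Lg xy]
        lipschitz_on_nonneg[OF Lf] lipschitz_on_nonneg[OF Lg]
      by (intro add_mono mult_mono) auto
    finally show "dist (f x * g x) (f y * g y) \<le> (Bf * Lg + Bg * Lf) * dist x y"
      by (simp add: algebra_simps)
  qed (use Bf Bg lipschitz_on_nonneg[OF Lf] lipschitz_on_nonneg[OF Lg] in simp)
  then show ?thesis unfolding lipschitzian_on_def by blast
qed

lemma solution_until_exit_exists:
  fixes F :: "'a::euclidean_space \<Rightarrow> 'a"
  assumes lip: "L-lipschitz_on (cball p \<epsilon>) F" and "0 < \<epsilon>" "0 \<le> T"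
  obtains y where "y 0 = q" "continuous_on {0..T} y"
    "\<And>b. b \<le> T \<Longrightarrow> (\<And>t. t \<in> {0..b} \<Longrightarrow> dist (y t) p \<le> \<epsilon>) \<Longrightarrow> ode_solution F y {0..b}"
proof -
  define G where "G = F \<circ> closest_point (cball p \<epsilon>)"
  have "1-lipschitz_on UNIV (closest_point (cball p \<epsilon>))"
    using closest_point_lipschitz[of "cball p \<epsilon>"] \<open>0 < \<epsilon>\<close> by (intro lipschitz_onI) auto
  moreover have "L-lipschitz_on (range (closest_point (cball p \<epsilon>))) F"
    using lip by (rule lipschitz_on_subset)
      (use closest_point_in_set[of "cball p \<epsilon>"] \<open>0 < \<epsilon>\<close> in auto)
  ultimately have "(L * 1)-lipschitz_on UNIV G"
    unfolding G_def by (rule lipschitz_on_compose)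
  then obtain y where "y 0 = q" and y: "ode_solution G y {0..T}"
    using lipschitz_ode_solution_exists \<open>0 \<le> T\<close> by blast
  show thesis
  proof
    show "y 0 = q" "continuous_on {0..T} y"
      using \<open>y 0 = q\<close> ode_solution_continuous_on[OF y] by auto
    fix b assume "b \<le> T" and near: "\<And>t. t \<in> {0..b} \<Longrightarrow> dist (y t) p \<le> \<epsilon>"
    have "ode_solution G y {0..b}"
      using ode_solution_subset[OF y] \<open>b \<le> T\<close> by auto
    moreover have "G (y t) = F (y t)" if "t \<in> {0..b}" for t
      using near[OF that] by (simp add: G_def closest_point_self dist_commute)
    ultimately show "ode_solution F y {0..b}" by (simp add: ode_solution_def)
  qed
qed

theorem escape_imp_not_lyapunov_stable:
  fixes F :: "'a::euclidean_space \<Rightarrow> 'a"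
  assumes lip: "L-lipschitz_on (cball p \<epsilon>) F" and "0 < \<epsilon>"
    and escape: "\<And>\<delta>. 0 < \<delta> \<Longrightarrow> \<exists>q T. dist q p < \<delta> \<and> 0 \<le> T \<and>
        \<not> (\<exists>x. x 0 = q \<and> ode_solution F x {0..T} \<and> (\<forall>t\<in>{0..T}. dist (x t) p \<le> \<epsilon>))"
  shows "\<not> lyapunov_stable F p"
proof
  assume "lyapunov_stable F p"
  then have "\<exists>\<delta>>0. \<forall>x b. ode_solution F x {0..b} \<and> dist (x 0) p < \<delta> \<longrightarrow> (\<forall>t\<in>{0..b}. dist (x t) p < \<epsilon>)"
    using \<open>0 < \<epsilon>\<close> unfolding lyapunov_stable_def by simp
  then obtain \<delta> where "0 < \<delta>"
    and stable: "\<forall>x b. ode_solution F x {0..b} \<and> dist (x 0) p < \<delta> \<longrightarrow> (\<forall>t\<in>{0..b}. dist (x t) p < \<epsilon>)"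
    by blast
  obtain q T where q: "dist q p < min \<delta> \<epsilon>" "0 \<le> T"
    and no_stay: "\<not> (\<exists>x. x 0 = q \<and> ode_solution F x {0..T} \<and> (\<forall>t\<in>{0..T}. dist (x t) p \<le> \<epsilon>))"
    using escape[of "min \<delta> \<epsilon>"] \<open>0 < \<delta>\<close> \<open>0 < \<epsilon>\<close> by auto
  obtain y where "y 0 = q" "continuous_on {0..T} y"
    and F_sol: "\<And>b. b \<le> T \<Longrightarrow> (\<And>t. t \<in> {0..b} \<Longrightarrow> dist (y t) p \<le> \<epsilon>) \<Longrightarrow> ode_solution F y {0..b}"
    using solution_until_exit_exists[OF lip \<open>0 < \<epsilon>\<close> \<open>0 \<le> T\<close>] by metis
  have "\<not> (\<forall>t\<in>{0..T}. dist (y t) p \<le> \<epsilon>)"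
    using no_stay F_sol[of T] \<open>y 0 = q\<close> by blast
  then obtain t where t: "t \<in> {0..T}" "\<epsilon> \<le> dist (y t) p"
    by (auto simp: not_le intro: less_imp_le)
  have "continuous_on {0..T} (\<lambda>t. dist (y t) p)"
    using \<open>continuous_on {0..T} y\<close> by (intro continuous_intros)
  moreover have "dist (y 0) p < \<epsilon>" using q \<open>y 0 = q\<close> by simp
  ultimately obtain t1 where t1: "0 < t1" "t1 \<le> t" "dist (y t1) p = \<epsilon>"
    and before: "\<And>s. 0 \<le> s \<Longrightarrow> s < t1 \<Longrightarrow> dist (y s) p < \<epsilon>"
    using first_hitting_time[of 0 T "\<lambda>t. dist (y t) p" \<epsilon> t] t by blast
  have "dist (y s) p \<le> \<epsilon>" if "s \<in> {0..t1}" for s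
    using before[of s] t1(3) that by (cases "s < t1") auto
  then have "ode_solution F y {0..t1}"
    using t1(2) t(1) by (intro F_sol) auto
  moreover have "dist (y 0) p < \<delta>"
    using q \<open>y 0 = q\<close> by simp
  ultimately have "dist (y t1) p < \<epsilon>"
    using stable[rule_format, of y t1 t1] t1(1) by simp
  then show False using t1(3) by simp
qed

section \<open>The reduced SWIR system\<close>

lemma power2_dist_triple:
  "(dist (x1::real, x2::real, x3::real) (y1, y2, y3))\<^sup>2 = (x1 - y1)\<^sup>2 + (x2 - y2)\<^sup>2 + (x3 - y3)\<^sup>2"
  by (simp add: dist_Pair_Pair dist_real_def)

lemma abs_diff_le_dist_triple:
  fixes p q :: "real \<times> real \<times> real"
  shows "\<bar>fst p - fst q\<bar> \<le> dist p q" "\<bar>fst (snd p) - fst (snd q)\<bar> \<le> dist p q"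
    "\<bar>snd (snd p) - snd (snd q)\<bar> \<le> dist p q"
  using dist_fst_le[of p q] dist_snd_le[of p q] dist_fst_le[of "snd p" "snd q"] dist_snd_le[of "snd p" "snd q"]
  by (auto simp: dist_real_def)

lemma mult_le_weighted_squares:
  fixes x y k :: real
  assumes "0 < k"
  shows "x * y \<le> k * x\<^sup>2 + y\<^sup>2 / (4 * k)"
proof -
  have "0 \<le> (2 * k * x - y)\<^sup>2 / (4 * k)" using assms by simp
  also have "\<dots> = k * x\<^sup>2 + y\<^sup>2 / (4 * k) - x * y"
    using assms by (simp add: field_simps power2_eq_square)
  finally show ?thesis by simp
qed

locale swir =
  fixes \<alpha> \<beta> \<gamma> \<eta> \<rho> :: real
  assumes \<alpha>_pos: "0 < \<alpha>" and \<beta>_pos: "0 < \<beta>" and \<gamma>_pos: "0 < \<gamma>" and \<eta>_pos: "0 < \<eta>"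
    and \<rho>_pos: "0 < \<rho>" and \<rho>_less_1: "\<rho> < 1"
begin

abbreviation F :: "real \<times> real \<times> real \<Rightarrow> real \<times> real \<times> real"
  where "F \<equiv> swir_field \<alpha> \<beta> \<gamma> \<eta> \<rho>"

definition growth_radius :: real where "growth_radius = (\<rho> * \<beta> - \<alpha>) / (6 * \<beta>)"

lemma disease_free_equilibria: "{p. equilibrium F p \<and> fst (snd p) = 0} = {(1, 0, 0)}"
proof (intro set_eqI iffI)
  fix p :: "real \<times> real \<times> real"
  obtain S I R where p: "p = (S, I, R)" by (cases p)
  assume "p \<in> {p. equilibrium F p \<and> fst (snd p) = 0}"
  then have "I = 0" "\<gamma> * (1 - S - R) + \<eta> * R = 0" "\<eta> * R = 0"
    by (auto simp: p equilibrium_def swir_field_def zero_prod_def)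
  then show "p \<in> {(1, 0, 0)}" using \<gamma>_pos \<eta>_pos by (simp add: p)
qed (simp add: equilibrium_def swir_field_def zero_prod_def)

lemma lipschitzian_on_F: "bounded X \<Longrightarrow> lipschitzian_on X F"
  using bounded_linear_fst bounded_linear_compose[OF bounded_linear_fst bounded_linear_snd]
    bounded_linear_compose[OF bounded_linear_snd bounded_linear_snd]
  unfolding swir_field_def case_prod_beta
  by (intro lipschitzian_on_Pair lipschitzian_on_add lipschitzian_on_diff lipschitzian_on_mult
      lipschitzian_on_const lipschitzian_on_bounded_linear) auto

lemma infected_derivative:
  assumes "ode_solution F x T" "t \<in> T"
  shows "((\<lambda>t. fst (snd (x t))) has_real_derivative
      fst (snd (x t)) * (\<rho> * \<beta> * fst (x t) - \<alpha> + \<beta> * (1 - fst (x t) - fst (snd (x t)) - snd (snd (x t)))))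
    (at t within T)"
proof -
  have "bounded_linear (\<lambda>p :: real \<times> real \<times> real. fst (snd p))"
    using bounded_linear_compose[OF bounded_linear_fst bounded_linear_snd] .
  from bounded_linear.has_vector_derivative[OF this] assms
  show ?thesis
    by (cases "x t") (auto simp: ode_solution_def swir_field_def algebra_simps
        has_real_derivative_iff_has_vector_derivative)
qed

lemma infection_rate_lower_bound:
  assumes "\<bar>S - 1\<bar> \<le> growth_radius" "\<bar>I\<bar> \<le> growth_radius" "\<bar>R\<bar> \<le> growth_radius"
  shows "(\<rho> * \<beta> - \<alpha>) / 2 \<le> \<rho> * \<beta> * S - \<alpha> + \<beta> * (1 - S - I - R)"
proof -
  have "(1 - \<rho>) * (S - 1) \<le> (1 - \<rho>) * \<bar>S - 1\<bar>"
    using \<rho>_less_1 by (intro mult_left_mono) auto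
  also have "\<dots> \<le> \<bar>S - 1\<bar>"
    using \<rho>_pos \<rho>_less_1 by (intro mult_left_le_one_le) auto
  finally have S: "\<beta> * ((1 - \<rho>) * (S - 1)) \<le> \<beta> * growth_radius"
    using assms(1) \<beta>_pos by (intro mult_left_mono) auto
  have I: "\<beta> * I \<le> \<beta> * growth_radius" and R: "\<beta> * R \<le> \<beta> * growth_radius"
    using assms(2,3) \<beta>_pos by (auto intro: mult_left_mono)
  have "\<beta> * growth_radius = (\<rho> * \<beta> - \<alpha>) / 6"
    using \<beta>_pos by (simp add: growth_radius_def)
  moreover have "\<rho> * \<beta> * S - \<alpha> + \<beta> * (1 - S - I - R)
      = (\<rho> * \<beta> - \<alpha>) - \<beta> * ((1 - \<rho>) * (S - 1)) - \<beta> * I - \<beta> * R"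
    by (simp add: algebra_simps)
  ultimately show ?thesis using S I R by simp
qed

lemma infected_exponential_growth:
  assumes sol: "ode_solution F x {0..b}"
    and near: "\<And>t. t \<in> {0..b} \<Longrightarrow> dist (x t) (1, 0, 0) \<le> growth_radius"
    and "0 < fst (snd (x 0))" "t \<in> {0..b}"
  shows "fst (snd (x 0)) * exp ((\<rho> * \<beta> - \<alpha>) / 2 * t) \<le> fst (snd (x t))"
proof (rule exponential_growth_if_DERIV_ge[where I = "\<lambda>t. fst (snd (x t))" and b = b])
  fix s assume "s \<in> {0..b}"
  show "((\<lambda>t. fst (snd (x t))) has_real_derivative fst (snd (x s)) *
      (\<rho> * \<beta> * fst (x s) - \<alpha> + \<beta> * (1 - fst (x s) - fst (snd (x s)) - snd (snd (x s))))) (at s within {0..b})"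
    using infected_derivative[OF sol \<open>s \<in> {0..b}\<close>] .
  show "(\<rho> * \<beta> - \<alpha>) / 2 \<le> \<rho> * \<beta> * fst (x s) - \<alpha> + \<beta> * (1 - fst (x s) - fst (snd (x s)) - snd (snd (x s)))"
    using near[OF \<open>s \<in> {0..b}\<close>] abs_diff_le_dist_triple[of "x s" "(1, 0, 0)"]
    by (intro infection_rate_lower_bound) auto
next
  show "0 \<le> (\<rho> * \<beta> - \<alpha>) / 2"
    using order_trans[OF zero_le_dist near[of 0]] \<open>t \<in> {0..b}\<close> \<beta>_pos
    by (simp add: growth_radius_def zero_le_divide_iff)
qed (use assms in auto)

lemma solution_leaves_growth_ball:
  assumes "\<alpha> < \<rho> * \<beta>" and "0 < I0" and x: "x 0 = (1, I0, 0)" "ode_solution F x {0..T}"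
    and T: "T = 2 * ln (2 * growth_radius / I0) / (\<rho> * \<beta> - \<alpha>)" "0 \<le> T"
  shows "\<exists>t\<in>{0..T}. growth_radius < dist (x t) (1, 0, 0)"
proof (rule ccontr)
  assume "\<not> ?thesis"
  then have near: "\<And>t. t \<in> {0..T} \<Longrightarrow> dist (x t) (1, 0, 0) \<le> growth_radius"
    by (auto simp: not_less)
  have "0 < growth_radius"
    using assms(1) \<beta>_pos by (simp add: growth_radius_def)
  have "2 * growth_radius = I0 * exp ((\<rho> * \<beta> - \<alpha>) / 2 * T)"
    using \<open>0 < I0\<close> \<open>0 < growth_radius\<close> assms(1) by (simp add: T(1))
  also have "\<dots> \<le> fst (snd (x T))"
    using infected_exponential_growth[OF x(2) near, of T] x(1) \<open>0 < I0\<close> T(2) by simp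
  also have "\<dots> \<le> growth_radius"
    using abs_diff_le_dist_triple(2)[of "x T" "(1, 0, 0)"] near[of T] T(2) by simp
  finally show False using \<open>0 < growth_radius\<close> by simp
qed

theorem unstable_if_supercritical:
  assumes "\<alpha> < \<rho> * \<beta>"
  shows "unstable_equilibrium F (1, 0, 0)"
proof -
  have "0 < growth_radius"
    using assms \<beta>_pos by (simp add: growth_radius_def)
  obtain L where lip: "L-lipschitz_on (cball (1, 0, 0) growth_radius) F"
    using lipschitzian_on_F[of "cball (1, 0, 0) growth_radius"] by (auto simp: lipschitzian_on_def)
  have "\<not> lyapunov_stable F (1, 0, 0)"
  proof (rule escape_imp_not_lyapunov_stable[OF lip \<open>0 < growth_radius\<close>])
    fix \<delta> :: real assume "0 < \<delta>"
    define I0 where "I0 = min \<delta> growth_radius / 2"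
    define T where "T = 2 * ln (2 * growth_radius / I0) / (\<rho> * \<beta> - \<alpha>)"
    have "0 < I0" "I0 < \<delta>" "I0 < growth_radius"
      using \<open>0 < \<delta>\<close> \<open>0 < growth_radius\<close> by (auto simp: I0_def)
    then have "0 \<le> T" "dist (1, I0, 0) (1 :: real, 0 :: real, 0 :: real) < \<delta>"
      using assms by (simp_all add: T_def dist_Pair_Pair)
    moreover have "\<not> (\<exists>x. x 0 = (1, I0, 0) \<and> ode_solution F x {0..T} \<and>
        (\<forall>t\<in>{0..T}. dist (x t) (1, 0, 0) \<le> growth_radius))"
      using solution_leaves_growth_ball[OF assms \<open>0 < I0\<close> _ _ T_def \<open>0 \<le> T\<close>] by (auto simp: not_le)
    ultimately show "\<exists>q T. dist q (1, 0, 0) < \<delta> \<and> 0 \<le> T \<and>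
        \<not> (\<exists>x. x 0 = q \<and> ode_solution F x {0..T} \<and> (\<forall>t\<in>{0..T}. dist (x t) (1, 0, 0) \<le> growth_radius))"
      by blast
  qed
  then show ?thesis
    by (simp add: unstable_equilibrium_def equilibrium_def swir_field_def zero_prod_def)
qed

end

locale swir_subcritical = swir +
  assumes subcritical: "\<rho> * \<beta> < \<alpha>"
begin

definition \<mu> :: real where "\<mu> = \<alpha> - \<rho> * \<beta>"

text \<open>The weights are chosen so that Young's inequality absorbs the cross terms of the linearisation
  (see \<open>linearization_bound\<close>): \<open>weight_R\<close> makes \<open>(\<eta> - \<gamma>)\<^sup>2 / \<gamma>\<close> at most \<open>weight_R * \<eta> / 4\<close>,
  and \<open>weight_I\<close> makes \<open>weight_I * \<mu>\<close> exceed twice the resulting coefficient of \<open>I\<^sup>2\<close>.\<close>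
definition weight_R :: real where "weight_R = 4 * (\<eta> - \<gamma>)\<^sup>2 / (\<gamma> * \<eta>) + 1"
definition weight_I :: real where "weight_I = 2 * ((\<beta> + \<gamma>)\<^sup>2 / \<gamma> + weight_R * \<alpha>\<^sup>2 / \<eta>) / \<mu> + 1"
definition decay_rate :: real where "decay_rate = min (min \<gamma> \<eta>) \<mu> / 2"
definition radius :: real where "radius = decay_rate / (6 * \<beta>)"

definition lyapunov :: "real \<times> real \<times> real \<Rightarrow> real" where
  "lyapunov p = (fst p - 1)\<^sup>2 + weight_R * (snd (snd p))\<^sup>2 + weight_I * (fst (snd p))\<^sup>2"

definition lyapunov_derivative :: "real \<times> real \<times> real \<Rightarrow> real \<times> real \<times> real \<Rightarrow> real" where
  "lyapunov_derivative p h = 2 * (fst p - 1) * fst h + 2 * weight_R * snd (snd p) * snd (snd h)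
     + 2 * weight_I * fst (snd p) * fst (snd h)"

lemma \<mu>_pos: "0 < \<mu>"
  using subcritical by (simp add: \<mu>_def)

lemma weight_R_ge_1: "1 \<le> weight_R"
  using \<gamma>_pos \<eta>_pos by (simp add: weight_R_def)

lemma weight_I_ge_1: "1 \<le> weight_I"
  using \<gamma>_pos \<eta>_pos \<mu>_pos weight_R_ge_1 by (simp add: weight_I_def)

lemma decay_rate_pos: "0 < decay_rate"
  using \<gamma>_pos \<eta>_pos \<mu>_pos by (simp add: decay_rate_def)

lemma radius_pos: "0 < radius"
  using decay_rate_pos \<beta>_pos by (simp add: radius_def)

lemma lyapunov_has_derivative: "(lyapunov has_derivative lyapunov_derivative p) (at p)"
  unfolding lyapunov_def lyapunov_derivative_def
  by (auto intro!: derivative_eq_intros simp: fun_eq_iff algebra_simps)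

lemma power2_dist_le_lyapunov: "(dist p (1, 0, 0))\<^sup>2 \<le> lyapunov p"
proof -
  have "(snd (snd p))\<^sup>2 \<le> weight_R * (snd (snd p))\<^sup>2" "(fst (snd p))\<^sup>2 \<le> weight_I * (fst (snd p))\<^sup>2"
    using weight_R_ge_1 weight_I_ge_1 by (simp_all add: mult_le_cancel_right1)
  then show ?thesis
    by (cases p) (simp add: power2_dist_triple lyapunov_def)
qed

lemma lyapunov_le_power2_dist: "lyapunov p \<le> (1 + weight_R + weight_I) * (dist p (1, 0, 0))\<^sup>2"
  using weight_R_ge_1 weight_I_ge_1
  by (cases p) (simp add: power2_dist_triple lyapunov_def algebra_simps add_mono)

text \<open>With \<open>(a, i, r) = (S - 1, I, R)\<close>, half the derivative of \<open>lyapunov\<close> along \<open>F\<close> is the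
  quadratic form bounded here plus the cubic remainder bounded in \<open>nonlinear_remainder_bound\<close>.\<close>
lemma linearization_bound:
  "- \<gamma> * a\<^sup>2 - weight_R * \<eta> * r\<^sup>2 - weight_I * \<mu> * i\<^sup>2 - (\<beta> + \<gamma>) * a * i + (\<eta> - \<gamma>) * a * r
     + weight_R * \<alpha> * r * i \<le> - decay_rate * (a\<^sup>2 + weight_R * r\<^sup>2 + weight_I * i\<^sup>2)"
proof -
  have ai: "- ((\<beta> + \<gamma>) * a * i) \<le> \<gamma> / 4 * a\<^sup>2 + (\<beta> + \<gamma>)\<^sup>2 / \<gamma> * i\<^sup>2"
    using mult_le_weighted_squares[of "\<gamma> / 4" "- a" "(\<beta> + \<gamma>) * i"] \<gamma>_pos
    unfolding power_mult_distrib by (simp add: algebra_simps)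
  have "(\<eta> - \<gamma>)\<^sup>2 / \<gamma> * r\<^sup>2 = weight_R * \<eta> * r\<^sup>2 / 4 - \<eta> / 4 * r\<^sup>2"
    using \<gamma>_pos \<eta>_pos by (simp add: weight_R_def field_simps)
  moreover have "(\<eta> - \<gamma>) * a * r \<le> \<gamma> / 4 * a\<^sup>2 + (\<eta> - \<gamma>)\<^sup>2 / \<gamma> * r\<^sup>2"
    using mult_le_weighted_squares[of "\<gamma> / 4" a "(\<eta> - \<gamma>) * r"] \<gamma>_pos
    unfolding power_mult_distrib by (simp add: algebra_simps)
  ultimately have ar: "(\<eta> - \<gamma>) * a * r \<le> \<gamma> / 4 * a\<^sup>2 + weight_R * \<eta> * r\<^sup>2 / 4 - \<eta> / 4 * r\<^sup>2"
    by simp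
  have "r * (\<alpha> * i) \<le> \<eta> / 4 * r\<^sup>2 + \<alpha>\<^sup>2 / \<eta> * i\<^sup>2"
    using mult_le_weighted_squares[of "\<eta> / 4" r "\<alpha> * i"] \<eta>_pos
    by (simp add: power_mult_distrib)
  from mult_left_mono[OF this, of weight_R] weight_R_ge_1
  have ri: "weight_R * \<alpha> * r * i \<le> weight_R * \<eta> * r\<^sup>2 / 4 + weight_R * \<alpha>\<^sup>2 / \<eta> * i\<^sup>2"
    by (simp add: algebra_simps)
  have I: "weight_I * \<mu> * i\<^sup>2 = 2 * ((\<beta> + \<gamma>)\<^sup>2 / \<gamma> * i\<^sup>2) + 2 * (weight_R * \<alpha>\<^sup>2 / \<eta> * i\<^sup>2) + \<mu> * i\<^sup>2"
    using \<mu>_pos by (simp add: weight_I_def field_simps)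
  have "decay_rate * a\<^sup>2 \<le> \<gamma> * a\<^sup>2 / 2" "decay_rate * (weight_R * r\<^sup>2) \<le> weight_R * \<eta> * r\<^sup>2 / 2"
    "decay_rate * (weight_I * i\<^sup>2) \<le> weight_I * \<mu> * i\<^sup>2 / 2"
    using weight_R_ge_1 weight_I_ge_1 mult_right_mono[of decay_rate "\<gamma> / 2" "a\<^sup>2"]
      mult_right_mono[of decay_rate "\<eta> / 2" "weight_R * r\<^sup>2"] mult_right_mono[of decay_rate "\<mu> / 2" "weight_I * i\<^sup>2"]
    by (auto simp: decay_rate_def algebra_simps)
  moreover have "0 \<le> \<eta> * r\<^sup>2" "0 \<le> \<mu> * i\<^sup>2"
    using \<eta>_pos \<mu>_pos by simp_all
  ultimately have "- \<gamma> * a\<^sup>2 - weight_R * \<eta> * r\<^sup>2 - weight_I * \<mu> * i\<^sup>2 - (\<beta> + \<gamma>) * a * i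
      + (\<eta> - \<gamma>) * a * r + weight_R * \<alpha> * r * i
      \<le> - (decay_rate * a\<^sup>2) - decay_rate * (weight_R * r\<^sup>2) - decay_rate * (weight_I * i\<^sup>2)"
    using ai ar ri I by linarith
  then show ?thesis by (simp add: algebra_simps)
qed

lemma nonlinear_remainder_bound:
  assumes "\<bar>a\<bar> \<le> radius" "\<bar>i\<bar> \<le> radius" "\<bar>r\<bar> \<le> radius"
  shows "- \<beta> * a\<^sup>2 * i + weight_I * i\<^sup>2 * ((\<rho> - 1) * \<beta> * a - \<beta> * i - \<beta> * r)
    \<le> decay_rate / 2 * (a\<^sup>2 + weight_I * i\<^sup>2)"
proof -
  have \<beta>_radius: "\<beta> * radius = decay_rate / 6" using \<beta>_pos by (simp add: radius_def)
  have "- \<beta> * a\<^sup>2 * i = \<beta> * a\<^sup>2 * (- i)" by simp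
  also have "\<dots> \<le> \<beta> * a\<^sup>2 * radius"
    using assms(2) \<beta>_pos by (intro mult_left_mono) auto
  also have "\<dots> = (\<beta> * radius) * a\<^sup>2" by (simp only: mult_ac)
  also have "\<dots> \<le> decay_rate / 2 * a\<^sup>2"
    unfolding \<beta>_radius using decay_rate_pos by (intro mult_right_mono) auto
  finally have cubic: "- \<beta> * a\<^sup>2 * i \<le> decay_rate / 2 * a\<^sup>2" .
  have "(\<rho> - 1) * a \<le> (1 - \<rho>) * \<bar>a\<bar>"
    using \<rho>_less_1 mult_left_mono[of "- a" "\<bar>a\<bar>" "1 - \<rho>"] by (simp add: algebra_simps)
  also have "\<dots> \<le> \<bar>a\<bar>"
    using \<rho>_pos \<rho>_less_1 by (intro mult_left_le_one_le) auto
  finally have "(\<rho> - 1) * a - i - r \<le> 3 * radius"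
    using assms by linarith
  from mult_left_mono[OF this, of \<beta>] \<beta>_pos \<beta>_radius
  have "(\<rho> - 1) * \<beta> * a - \<beta> * i - \<beta> * r \<le> decay_rate / 2"
    by (simp add: algebra_simps)
  from mult_left_mono[OF this, of "weight_I * i\<^sup>2"] weight_I_ge_1
  have "weight_I * i\<^sup>2 * ((\<rho> - 1) * \<beta> * a - \<beta> * i - \<beta> * r) \<le> decay_rate / 2 * (weight_I * i\<^sup>2)"
    by (simp add: mult.commute)
  with cubic show ?thesis by (simp add: algebra_simps)
qed

lemma lyapunov_decay:
  assumes "lyapunov p < radius\<^sup>2"
  shows "lyapunov_derivative p (F p) \<le> - decay_rate * lyapunov p"
proof -
  obtain S I R where p: "p = (S, I, R)" by (cases p)
  have "(dist p (1, 0, 0))\<^sup>2 < radius\<^sup>2"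
    using power2_dist_le_lyapunov assms by (rule le_less_trans)
  then have "dist p (1, 0, 0) < radius"
    using radius_pos by (simp add: power_less_imp_less_base)
  then have small: "\<bar>S - 1\<bar> \<le> radius" "\<bar>I\<bar> \<le> radius" "\<bar>R\<bar> \<le> radius"
    using abs_diff_le_dist_triple[of p "(1, 0, 0)"] by (auto simp: p)
  define a where "a = S - 1"
  have "\<bar>a\<bar> \<le> radius" using small(1) by (simp add: a_def)
  have "lyapunov_derivative p (F p)
      = 2 * (- \<gamma> * a\<^sup>2 - weight_R * \<eta> * R\<^sup>2 - weight_I * \<mu> * I\<^sup>2 - (\<beta> + \<gamma>) * a * I + (\<eta> - \<gamma>) * a * R
          + weight_R * \<alpha> * R * I)
        + 2 * (- \<beta> * a\<^sup>2 * I + weight_I * I\<^sup>2 * ((\<rho> - 1) * \<beta> * a - \<beta> * I - \<beta> * R))"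
    by (simp add: p a_def lyapunov_derivative_def swir_field_def \<mu>_def algebra_simps power2_eq_square)
  also have "\<dots> \<le> 2 * (- decay_rate * (a\<^sup>2 + weight_R * R\<^sup>2 + weight_I * I\<^sup>2))
      + 2 * (decay_rate / 2 * (a\<^sup>2 + weight_I * I\<^sup>2))"
    using add_mono[OF mult_left_mono[OF linearization_bound[of a R I], of 2]
        mult_left_mono[OF nonlinear_remainder_bound[OF \<open>\<bar>a\<bar> \<le> radius\<close> small(2,3)], of 2]]
    by simp
  also have "\<dots> \<le> - decay_rate * lyapunov p"
    using decay_rate_pos weight_R_ge_1 by (simp add: p a_def lyapunov_def algebra_simps)
  finally show ?thesis .
qed

sublocale exponential_lyapunov F "(1, 0, 0)" lyapunov lyapunov_derivative "1 + weight_R + weight_I"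
    "radius\<^sup>2" decay_rate
  using lyapunov_has_derivative power2_dist_le_lyapunov lyapunov_le_power2_dist lyapunov_decay
    decay_rate_pos radius_pos
  by unfold_locales (simp_all add: swir_field_def zero_prod_def)

end

theorem theorem1:
  fixes \<alpha> \<beta> \<gamma> \<eta> \<rho> :: real
  assumes "\<alpha> > 0" "\<beta> > 0" "\<gamma> > 0" "\<eta> > 0" "0 < \<rho>" "\<rho> < 1" "\<gamma> \<ge> \<alpha>"
  shows "{p. equilibrium (swir_field \<alpha> \<beta> \<gamma> \<eta> \<rho>) p \<and> fst (snd p) = 0} = {(1, 0, 0)}
         \<and> (\<rho> * \<beta> / \<alpha> < 1 \<longrightarrow> locally_asymptotically_stable (swir_field \<alpha> \<beta> \<gamma> \<eta> \<rho>) (1, 0, 0))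
         \<and> (\<rho> * \<beta> / \<alpha> > 1 \<longrightarrow> unstable_equilibrium (swir_field \<alpha> \<beta> \<gamma> \<eta> \<rho>) (1, 0, 0))"
proof -
  have "swir \<alpha> \<beta> \<gamma> \<eta> \<rho>"
    using assms by unfold_locales
  then interpret swir \<alpha> \<beta> \<gamma> \<eta> \<rho> .
  have "locally_asymptotically_stable F (1, 0, 0)" if "\<rho> * \<beta> / \<alpha> < 1"
  proof -
    have "\<rho> * \<beta> < \<alpha>" using that \<alpha>_pos by (simp add: field_simps)
    with \<open>swir \<alpha> \<beta> \<gamma> \<eta> \<rho>\<close> interpret swir_subcritical \<alpha> \<beta> \<gamma> \<eta> \<rho>
      by (simp add: swir_subcritical_def swir_subcritical_axioms_def)
    show ?thesis by (rule asymptotically_stable)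
  qed
  moreover have "unstable_equilibrium F (1, 0, 0)" if "\<rho> * \<beta> / \<alpha> > 1"
    using that \<alpha>_pos by (intro unstable_if_supercritical) (simp add: field_simps)
  ultimately show ?thesis
    using disease_free_equilibria by blast
qed

end
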